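(* Let $n\ge3$ and $x\in\mathbb{C}$, and let $A$ be the $n\times n$ tridiagonal matrix with all diagonal entries $x$, all subdiagonal entries $\mathbf{i}$, superdiagonal entries $A_{1,2}=A_{n-1,n}=2\mathbf{i}$ and $A_{k,k+1}=\mathbf{i}$ for $2\le k\le n-2$, where $\mathbf{i}=\sqrt{-1}$. Then $$\det(A)=(x^2+4)F_{n-1}(x).$$
   Context: The Fibonacci polynomials are defined by $F_0(x)=0$, $F_1(x)=1$, $F_n(x)=xF_{n-1}(x)+F_{n-2}(x)$ for $n\ge2$. *)

theory Defs
  imports Complex_Main "Jordan_Normal_Form.Determinant"
begin

fun fibpoly :: "nat \<Rightarrow> complex \<Rightarrow> complex" where
  "fibpoly 0 x = 0"
| "fibpoly (Suc 0) x = 1"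
| "fibpoly (Suc (Suc n)) x = x * fibpoly (Suc n) x + fibpoly n x"

text \<open>The n x n tridiagonal matrix of the statement, with 0-based indices:
  diagonal x, subdiagonal i, superdiagonal i except entries (0,1) and (n-2,n-1) which are 2i.\<close>
definition tri_mat :: "nat \<Rightarrow> complex \<Rightarrow> complex mat" where
  "tri_mat n x = mat n n (\<lambda>(r, c).
     if r = c then x
     else if r = c + 1 then \<i>
     else if c = r + 1 then (if r = 0 \<or> r = n - 2 then 2 * \<i> else \<i>)
     else 0)"

end

theory Submission
  imports Defs
begin

text \<open>Expanding along the last row, the leading minors of a tridiagonal matrix satisfy the
  continuant recurrence. Here all products of opposite off-diagonal entries are \<open>-1\<close>, so the
  recurrence is that of the Fibonacci polynomials, except for the first and the last step, where
  the product is \<open>-2\<close>. The first exception turns the leading minors into the Lucas polynomials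
  \<open>L\<^sub>k = x F\<^sub>k + 2 F\<^sub>k\<^sub>-\<^sub>1\<close>, and the last one gives
  \<open>x L\<^sub>n\<^sub>-\<^sub>1 + 2 L\<^sub>n\<^sub>-\<^sub>2 = (x\<^sup>2 + 4) F\<^sub>n\<^sub>-\<^sub>1\<close>.\<close>

definition tridiag_mat ::
    "nat \<Rightarrow> (nat \<Rightarrow> 'a::zero) \<Rightarrow> (nat \<Rightarrow> 'a) \<Rightarrow> (nat \<Rightarrow> 'a) \<Rightarrow> 'a mat" where
  "tridiag_mat m d l u = mat m m (\<lambda>(r, c).
     if r = c then d r
     else if r = c + 1 then l c
     else if c = r + 1 then u r
     else 0)"

lemma tridiag_mat_carrier: "tridiag_mat m d l u \<in> carrier_mat m m"
  unfolding tridiag_mat_def by auto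

lemma tridiag_mat_cong:
  assumes "\<And>r. r < m \<Longrightarrow> d r = d' r"
    and "\<And>r. Suc r < m \<Longrightarrow> l r = l' r"
    and "\<And>r. Suc r < m \<Longrightarrow> u r = u' r"
  shows "tridiag_mat m d l u = tridiag_mat m d' l' u'"
  by (rule eq_matI) (auto simp: tridiag_mat_def assms)

lemma det_tridiag_mat_0: "det (tridiag_mat 0 d l u) = 1"
  by (rule det_dim_zero[OF tridiag_mat_carrier])

lemma det_tridiag_mat_1: "det (tridiag_mat (Suc 0) d l u) = d 0"
  by (subst det_single) (auto simp: tridiag_mat_def)

lemma mat_delete_tridiag_mat_last:
  "mat_delete (tridiag_mat (Suc m) d l u) m m = tridiag_mat m d l u"
  by (rule eq_matI) (auto simp: tridiag_mat_def mat_delete_def)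

lemma det_tridiag_mat_Suc_Suc:
  fixes d l u :: "nat \<Rightarrow> 'a::comm_ring_1"
  shows "det (tridiag_mat (Suc (Suc m)) d l u)
    = d (Suc m) * det (tridiag_mat (Suc m) d l u) - l m * u m * det (tridiag_mat m d l u)"
proof -
  let ?A = "tridiag_mat (Suc (Suc m)) d l u"
  let ?B = "mat_delete ?A (Suc m) m"
  have "det ?A = (\<Sum>j<Suc (Suc m). ?A $$ (Suc m, j) * cofactor ?A (Suc m) j)"
    by (rule laplace_expansion_row[OF tridiag_mat_carrier]) auto
  also have "\<dots> = l m * cofactor ?A (Suc m) m + d (Suc m) * cofactor ?A (Suc m) (Suc m)"
    by (simp add: sum.neutral tridiag_mat_def)
  finally have expand_row: "det ?A = l m * cofactor ?A (Suc m) m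
      + d (Suc m) * cofactor ?A (Suc m) (Suc m)" .
  have B_carrier: "?B \<in> carrier_mat (Suc m) (Suc m)"
    by (simp add: mat_delete_def tridiag_mat_def)
  have "det ?B = (\<Sum>i<Suc m. ?B $$ (i, m) * cofactor ?B i m)"
    by (rule laplace_expansion_column[OF B_carrier]) auto
  also have "\<dots> = u m * cofactor ?B m m"
    by (simp add: sum.neutral tridiag_mat_def mat_delete_def)
  also have "mat_delete ?B m m = tridiag_mat m d l u"
    by (rule eq_matI) (auto simp: tridiag_mat_def mat_delete_def)
  then have "cofactor ?B m m = det (tridiag_mat m d l u)"
    by (simp add: cofactor_def flip: mult_2)
  finally have expand_column: "det ?B = u m * det (tridiag_mat m d l u)" .
  have "cofactor ?A (Suc m) m = - (u m * det (tridiag_mat m d l u))"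
    by (simp add: cofactor_def expand_column)
  moreover have "cofactor ?A (Suc m) (Suc m) = det (tridiag_mat (Suc m) d l u)"
    by (simp add: cofactor_def mat_delete_tridiag_mat_last flip: mult_2)
  ultimately show ?thesis
    using expand_row by (simp add: algebra_simps)
qed

lemma det_tridiag_mat_lucas:
  "det (tridiag_mat (Suc k) (\<lambda>_. x) (\<lambda>_. \<i>) (\<lambda>r. if r = 0 then 2 * \<i> else \<i>))
    = x * fibpoly (Suc k) x + 2 * fibpoly k x"
  (is "det (tridiag_mat _ _ _ ?u) = _")
proof (induction k x rule: fibpoly.induct)
  case (1 x)
  show ?case by (simp add: det_tridiag_mat_1)
next
  case (2 x)
  show ?case
    by (simp add: det_tridiag_mat_Suc_Suc det_tridiag_mat_1 det_tridiag_mat_0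
        mult.left_commute[of \<i>])
next
  case (3 k x)
  let ?T = "\<lambda>k. tridiag_mat k (\<lambda>_. x) (\<lambda>_. \<i>) ?u"
  have "det (?T (Suc (Suc (Suc k)))) = x * det (?T (Suc (Suc k))) + det (?T (Suc k))"
    by (subst det_tridiag_mat_Suc_Suc) (simp add: algebra_simps)
  with 3 show ?case
    by (simp add: algebra_simps)
qed

theorem theorem12:
  fixes n :: nat and x :: complex
  assumes "n \<ge> 3"
  shows "det (tri_mat n x) = (x\<^sup>2 + 4) * fibpoly (n - 1) x"
proof -
  obtain m where n: "n = Suc (Suc (Suc m))"
    using assms by (intro that[of "n - 3"]) arith
  define u where "u r = (if r = 0 \<or> r = n - 2 then 2 * \<i> else \<i>)" for r
  define u\<^sub>0 :: "nat \<Rightarrow> complex" where "u\<^sub>0 r = (if r = 0 then 2 * \<i> else \<i>)" for r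
  let ?T = "\<lambda>k v. tridiag_mat k (\<lambda>_. x) (\<lambda>_. \<i>) v"
  have leading: "?T k u = ?T k u\<^sub>0" if "k < n" for k
    by (rule tridiag_mat_cong) (use that in \<open>auto simp: u_def u\<^sub>0_def\<close>)
  have "tri_mat n x = ?T n u"
    by (rule eq_matI) (auto simp: tridiag_mat_def tri_mat_def u_def)
  then have "det (tri_mat n x) = det (?T (Suc (Suc (Suc m))) u)"
    by (simp add: n)
  also have "\<dots> = x * det (?T (Suc (Suc m)) u) + 2 * det (?T (Suc m) u)"
    using n by (subst det_tridiag_mat_Suc_Suc) (simp add: u_def mult.left_commute[of \<i>])
  also have "\<dots> = x * det (?T (Suc (Suc m)) u\<^sub>0) + 2 * det (?T (Suc m) u\<^sub>0)"
    using leading by (simp add: n)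
  also have "\<dots> = (x\<^sup>2 + 4) * fibpoly (n - 1) x"
    unfolding u\<^sub>0_def det_tridiag_mat_lucas by (simp add: n algebra_simps power2_eq_square)
  finally show ?thesis .
qed

end
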